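(* Every matroid of finite rank is unionable: if $F$ is a matroid of finite rank and $N$ is any matroid, then $F\vee N$ is a matroid.
   Context: Matroids (possibly infinite) $(E,\mathcal{L})$: $\emptyset\in\mathcal{L}$; subsets of independent sets are independent; if $B$ is maximal in $\mathcal{L}$ and $A\in\mathcal{L}$ is not maximal, then $A\cup\{b\}\in\mathcal{L}$ for some $b\in B\setminus A$; for $A\in\mathcal{L}$ and $A\subseteq X\subseteq E$, $\{S\in\mathcal{L}:A\subseteq S\subseteq X\}$ has a maximal element. The rank is the cardinality of a base (maximal independent set). The union $F\vee N$ has ground set $E(F)\cup E(N)$ and independent sets $\{S\cup T: S\in\mathcal{L}(F),\ T\in\mathcal{L}(N)\}$. A matroid $F$ is unionable if $F\vee N$ is a matroid for every matroid $N$. *)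

theory Defs
  imports Main
begin

definition is_base :: "'a set set \<Rightarrow> 'a set \<Rightarrow> bool" where
  "is_base L B \<longleftrightarrow> B \<in> L \<and> (\<forall>S\<in>L. B \<subseteq> S \<longrightarrow> S = B)"

definition matroid :: "'a set \<Rightarrow> 'a set set \<Rightarrow> bool" where
  "matroid E L \<longleftrightarrow>
     (\<forall>S\<in>L. S \<subseteq> E) \<and>
     {} \<in> L \<and>
     (\<forall>A B. B \<in> L \<longrightarrow> A \<subseteq> B \<longrightarrow> A \<in> L) \<and>
     (\<forall>A B. is_base L B \<longrightarrow> A \<in> L \<longrightarrow> \<not> is_base L A \<longrightarrow>
        (\<exists>b\<in>B - A. insert b A \<in> L)) \<and>
     (\<forall>A X. A \<in> L \<longrightarrow> A \<subseteq> X \<longrightarrow> X \<subseteq> E \<longrightarrow>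
        (\<exists>M. M \<in> L \<and> A \<subseteq> M \<and> M \<subseteq> X \<and>
              (\<forall>S\<in>L. M \<subseteq> S \<longrightarrow> S \<subseteq> X \<longrightarrow> S = M)))"

text \<open>Finite rank: the (common) cardinality of a base is finite, i.e. some base is finite.\<close>
definition finite_rank :: "'a set set \<Rightarrow> bool" where
  "finite_rank L \<longleftrightarrow> (\<exists>B. is_base L B \<and> finite B)"

definition union_indep :: "'a set set \<Rightarrow> 'a set set \<Rightarrow> 'a set set" where
  "union_indep L1 L2 = {S \<union> T | S T. S \<in> L1 \<and> T \<in> L2}"

end

theory Submission
  imports Defs
begin

(*
  Write a union-independent set I as S \<union> T with S independent in F and T in N.  If T can
  be chosen to be an N-base, the size of the F-part I - T does not depend on the choice,
  since two bases of N differ by equally many elements once one difference is finite.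

  Augmentation: if I cannot be augmented from J = S' \<union> T' (T' an N-base), then a
  representation of I overlapping (S', T') minimally has an N-base as N-part and an F-part
  at least as large as S'; otherwise an augmentation step in N, or in the finite-rank F,
  would move an element across the representation and lower the overlap.  Applied to a
  non-maximal A against a base of the union, and to that base against a set containing A
  plus one element, this gives a strict cycle of inequalities between F-parts.

  Maximal subsets: among pairs (S, B) with B maximal N-independent in X, one maximising
  |S - B| (bounded by the rank of F) yields a maximal union-independent subset S \<union> B of X.
*)

definition max_indep_in :: "'a set set \<Rightarrow> 'a set \<Rightarrow> 'a set \<Rightarrow> bool" where
  "max_indep_in L X M \<longleftrightarrow> M \<in> L \<and> M \<subseteq> X \<and> (\<forall>S\<in>L. M \<subseteq> S \<longrightarrow> S \<subseteq> X \<longrightarrow> S = M)"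

lemma is_base_indep: "is_base L B \<Longrightarrow> B \<in> L"
  unfolding is_base_def by blast

lemma is_base_maximal: "is_base L B \<Longrightarrow> S \<in> L \<Longrightarrow> B \<subseteq> S \<Longrightarrow> S = B"
  unfolding is_base_def by blast

lemma psubset_base_not_base: "is_base L B \<Longrightarrow> A \<subset> B \<Longrightarrow> \<not> is_base L A"
  unfolding is_base_def by blast

lemma max_indep_inD:
  assumes "max_indep_in L X M"
  shows "M \<in> L" "M \<subseteq> X" "\<And>S. S \<in> L \<Longrightarrow> M \<subseteq> S \<Longrightarrow> S \<subseteq> X \<Longrightarrow> S = M"
  using assms unfolding max_indep_in_def by blast+

locale indep_matroid =
  fixes E :: "'a set" and L :: "'a set set"
  assumes matroid: "matroid E L"
begin

lemma indep_subset_ground: "S \<in> L \<Longrightarrow> S \<subseteq> E"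
  using matroid unfolding matroid_def by (elim conjE) blast

lemma empty_indep: "{} \<in> L"
  using matroid unfolding matroid_def by (elim conjE)

lemma indep_subset: "B \<in> L \<Longrightarrow> A \<subseteq> B \<Longrightarrow> A \<in> L"
  using matroid unfolding matroid_def by (elim conjE) blast

lemma base_augment:
  "is_base L B \<Longrightarrow> A \<in> L \<Longrightarrow> \<not> is_base L A \<Longrightarrow> \<exists>b\<in>B - A. insert b A \<in> L"
  using matroid unfolding matroid_def by (elim conjE) blast

lemma ex_max_indep_in_ground:
  assumes "A \<in> L" "A \<subseteq> X" "X \<subseteq> E"
  shows "\<exists>M. max_indep_in L X M \<and> A \<subseteq> M"
proof -
  have "\<forall>A X. A \<in> L \<longrightarrow> A \<subseteq> X \<longrightarrow> X \<subseteq> E \<longrightarrow>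
      (\<exists>M. M \<in> L \<and> A \<subseteq> M \<and> M \<subseteq> X \<and> (\<forall>S\<in>L. M \<subseteq> S \<longrightarrow> S \<subseteq> X \<longrightarrow> S = M))"
    using matroid unfolding matroid_def by (elim conjE)
  then show ?thesis
    using assms unfolding max_indep_in_def by meson
qed

lemma ex_max_indep_in:
  assumes "A \<in> L" "A \<subseteq> X"
  obtains M where "max_indep_in L X M" "A \<subseteq> M"
proof -
  have "A \<subseteq> X \<inter> E"
    using assms(2) indep_subset_ground[OF assms(1)] by simp
  then obtain M where M: "max_indep_in L (X \<inter> E) M" "A \<subseteq> M"
    using ex_max_indep_in_ground[OF assms(1) _ Int_lower2] by blast
  have "S = M" if "S \<in> L" "M \<subseteq> S" "S \<subseteq> X" for S
    using max_indep_inD(3)[OF M(1) that(1,2)] that(3) indep_subset_ground[OF that(1)] by simp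
  then have "max_indep_in L X M"
    using max_indep_inD(1,2)[OF M(1)] unfolding max_indep_in_def by simp
  then show thesis
    using that M(2) by simp
qed

lemma ex_base: obtains B where "is_base L B"
proof -
  obtain B where B: "max_indep_in L E B"
    using ex_max_indep_in[OF empty_indep] by blast
  have "is_base L B"
    unfolding is_base_def using max_indep_inD[OF B] indep_subset_ground by simp
  then show thesis by (rule that)
qed

lemma indep_extend_to_base:
  assumes I: "I \<in> L" and B: "is_base L B"
  obtains B' where "is_base L B'" "I \<subseteq> B'" "B' \<subseteq> I \<union> B"
proof -
  obtain M where M: "max_indep_in L (I \<union> B) M" "I \<subseteq> M"
    using ex_max_indep_in[OF I] by blast
  have "is_base L M"
  proof (rule ccontr)
    assume "\<not> is_base L M"
    then obtain b where "b \<in> B - M" "insert b M \<in> L"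
      using base_augment[OF B max_indep_inD(1)[OF M(1)]] by blast
    moreover have "insert b M \<subseteq> I \<union> B"
      using \<open>b \<in> B - M\<close> max_indep_inD(2)[OF M(1)] by blast
    ultimately show False
      using max_indep_inD(3)[OF M(1)] by blast
  qed
  then show thesis
    using that M max_indep_inD(2)[OF M(1)] by blast
qed

lemma base_single_exchange:
  assumes B1: "is_base L B1" and B2: "is_base L B2" and x: "B1 - B2 = {x}"
  obtains y where "B2 - B1 = {y}"
proof -
  have "B1 \<noteq> B2"
    using x by auto
  then have "\<not> B2 \<subseteq> B1"
    using is_base_maximal[OF B2 is_base_indep[OF B1]] by auto
  then obtain c where c: "c \<in> B2" "c \<notin> B1" by auto
  have "y = c" if y: "y \<in> B2 - B1" for y
  proof (rule ccontr)
    assume "y \<noteq> c"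
    have "B2 - {c} \<in> L"
      using indep_subset[OF is_base_indep[OF B2]] by simp
    moreover have "\<not> is_base L (B2 - {c})"
      using psubset_base_not_base[OF B2] c(1) by auto
    ultimately obtain b where b: "b \<in> B1 - (B2 - {c})" "insert b (B2 - {c}) \<in> L"
      using base_augment[OF B1] by auto
    have "b \<in> B1 - B2"
      using b(1) c(2) by blast
    then have "b = x"
      using x by blast
    then have "B1 \<subseteq> insert b (B2 - {c})"
      using x c(2) by blast
    then have "insert b (B2 - {c}) = B1"
      using is_base_maximal[OF B1 b(2)] by simp
    then show False
      using y \<open>y \<noteq> c\<close> by auto
  qed
  then have "B2 - B1 = {c}"
    using c by blast
  then show thesis by (rule that)
qed

lemma base_exchange:
  assumes B1: "is_base L B1" and B2: "is_base L B2" and x: "x \<in> B1 - B2"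
  obtains y where "y \<in> B2 - B1" "is_base L (insert y (B1 - {x}))"
proof -
  have "B1 - {x} \<in> L" "\<not> is_base L (B1 - {x})"
    using indep_subset[OF is_base_indep[OF B1]] psubset_base_not_base[OF B1, of "B1 - {x}"] x by blast+
  then obtain y where y: "y \<in> B2 - (B1 - {x})" "insert y (B1 - {x}) \<in> L"
    using base_augment[OF B2] by blast
  have y_new: "y \<in> B2 - B1"
    using x y(1) by blast
  obtain B3 where B3: "is_base L B3" "insert y (B1 - {x}) \<subseteq> B3" "B3 \<subseteq> insert y (B1 - {x}) \<union> B2"
    using indep_extend_to_base[OF y(2) B2] by blast
  have "x \<notin> B3"
    using B3(3) x y_new by blast
  then have "B1 - B3 = {x}"
    using B3(2) x by blast
  then obtain w where w: "B3 - B1 = {w}"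
    using base_single_exchange[OF B1 B3(1)] by blast
  have "y \<in> B3 - B1"
    using B3(2) y_new by blast
  then have "B3 - B1 = {y}"
    using w by auto
  then have "B3 = insert y (B1 - {x})"
    using B3(2) \<open>x \<notin> B3\<close> by blast
  then show thesis
    using that y_new B3(1) by simp
qed

lemma base_diff_card_le:
  assumes "is_base L B1" "is_base L B2" "finite (B1 - B2)"
  shows "finite (B2 - B1) \<and> card (B2 - B1) \<le> card (B1 - B2)"
  using assms
proof (induction "card (B1 - B2)" arbitrary: B1)
  case 0
  then have "B2 = B1"
    using is_base_maximal[OF "0.prems"(1) is_base_indep[OF "0.prems"(2)]] by auto
  then show ?case by simp
next
  case (Suc n)
  then obtain x where x: "x \<in> B1 - B2"
    by (metis card.empty empty_iff nat.distinct(1) subsetI subset_antisym)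
  obtain y where y: "y \<in> B2 - B1" and B3: "is_base L (insert y (B1 - {x}))"
    using base_exchange[OF Suc.prems(1,2) x] by blast
  let ?B3 = "insert y (B1 - {x})"
  have "?B3 - B2 = (B1 - B2) - {x}"
    using y by blast
  then have "n = card (?B3 - B2)" "finite (?B3 - B2)"
    using Suc.hyps(2) Suc.prems(3) x by auto
  then have IH: "finite (B2 - ?B3)" "card (B2 - ?B3) \<le> n"
    using Suc.hyps(1) B3 Suc.prems(2) by blast+
  have sub: "B2 - B1 \<subseteq> insert y (B2 - ?B3)"
    using x by blast
  have "card (B2 - B1) \<le> card (insert y (B2 - ?B3))"
    using card_mono[OF _ sub] IH(1) by blast
  also have "\<dots> \<le> Suc n"
    using IH by (simp add: card_insert_if)
  finally show ?case
    using Suc.hyps(2) sub IH(1) finite_subset by auto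
qed

lemma max_indep_in_diff_card_le:
  assumes B: "max_indep_in L X B" and B': "max_indep_in L X B'" and fin: "finite (B - B')"
  shows "finite (B' - B) \<and> card (B' - B) \<le> card (B - B')"
proof -
  note BL = max_indep_inD[OF B] and B'L = max_indep_inD[OF B']
  obtain B0 where B0: "is_base L B0"
    using ex_base by blast
  obtain C' where C': "is_base L C'" "B' \<subseteq> C'"
    using indep_extend_to_base[OF B'L(1) B0] by blast
  obtain C where C: "is_base L C" "B \<subseteq> C" "C \<subseteq> B \<union> C'"
    using indep_extend_to_base[OF BL(1) C'(1)] by blast
  have "C \<inter> X = B"
    using BL(3)[OF indep_subset[OF is_base_indep[OF C(1)]]] C(2) BL(2) by blast
  then have sub: "C - C' \<subseteq> B - B'" "B' - B \<subseteq> C' - C"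
    using C(3) C'(2) B'L(2) by blast+
  then have "finite (C - C')"
    using fin finite_subset by blast
  then have CC': "finite (C' - C)" "card (C' - C) \<le> card (C - C')"
    using base_diff_card_le[OF C(1) C'(1)] by blast+
  have "card (B' - B) \<le> card (C' - C)"
    using card_mono[OF CC'(1) sub(2)] .
  also have "\<dots> \<le> card (C - C')"
    using CC'(2) .
  also have "\<dots> \<le> card (B - B')"
    using card_mono[OF fin sub(1)] .
  finally show ?thesis
    using CC'(1) sub(2) finite_subset by blast
qed

lemma max_indep_in_card_eq:
  assumes "max_indep_in L X B" "max_indep_in L X B'" "finite X"
  shows "card B = card B'"
proof -
  have fin: "finite B" "finite B'"
    using finite_subset[OF max_indep_inD(2) assms(3)] assms(1,2) by blast+
  have "card (B - B') = card (B' - B)"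
    using max_indep_in_diff_card_le[OF assms(1,2)] max_indep_in_diff_card_le[OF assms(2,1)] fin
    by (simp add: le_antisym)
  then show ?thesis
    using card_Int_Diff[OF fin(1), of B'] card_Int_Diff[OF fin(2), of B] by (simp add: Int_commute)
qed

lemma indep_augment:
  assumes P: "P \<in> L" and Q: "Q \<in> L" and fin: "finite P" "finite Q" and less: "card P < card Q"
  shows "\<exists>q\<in>Q - P. insert q P \<in> L"
proof -
  obtain P' where P': "max_indep_in L (P \<union> Q) P'" "P \<subseteq> P'"
    using ex_max_indep_in[OF P] by blast
  obtain Q' where Q': "max_indep_in L (P \<union> Q) Q'" "Q \<subseteq> Q'"
    using ex_max_indep_in[OF Q] by blast
  have "card Q \<le> card Q'"
    using card_mono[OF _ Q'(2)] max_indep_inD(2)[OF Q'(1)] fin finite_subset by blast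
  also have "\<dots> = card P'"
    using max_indep_in_card_eq[OF Q'(1) P'(1)] fin by simp
  finally obtain q where "q \<in> P'" "q \<notin> P"
    using less P'(2) by (metis le_less_trans less_irrefl subset_antisym subsetI)
  moreover have "insert q P \<in> L"
    using indep_subset[OF max_indep_inD(1)[OF P'(1)]] calculation P'(2) by blast
  ultimately show ?thesis
    using max_indep_inD(2)[OF P'(1)] by blast
qed

lemma indep_card_le_finite_base:
  assumes B0: "is_base L B0" "finite B0" and S: "S \<in> L"
  shows "finite S \<and> card S \<le> card B0"
proof -
  obtain B where B: "is_base L B" "S \<subseteq> B"
    using indep_extend_to_base[OF S B0(1)] by blast
  have BB0: "finite (B - B0)" "card (B - B0) \<le> card (B0 - B)"
    using base_diff_card_le[OF B0(1) B(1)] B0(2) by simp_all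
  then have "finite B"
    using B0(2) by (metis Diff_partition finite_Diff2 finite_Un Un_Diff_cancel2)
  then have "card B \<le> card B0"
    using BB0(2) card_Int_Diff[of B B0] card_Int_Diff[OF B0(2), of B] by (simp add: Int_commute)
  then show ?thesis
    using B(2) \<open>finite B\<close> card_mono finite_subset by (metis le_trans)
qed

lemma card_diff_base_eq:
  assumes T: "is_base L T" and T': "is_base L T'" and sub: "T \<subseteq> I" "T' \<subseteq> I"
    and fin: "finite (I - T)"
  shows "finite (I - T') \<and> card (I - T') = card (I - T)"
proof -
  define R where "R = I - T - T'"
  have "T' - T \<subseteq> I - T" "R \<subseteq> I - T"
    using sub unfolding R_def by blast+
  then have fin': "finite (T' - T)" "finite R"
    using fin by (meson finite_subset)+
  then have fin'': "finite (T - T')" and le: "card (T - T') \<le> card (T' - T)"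
    using base_diff_card_le[OF T' T] by blast+
  have "card (T' - T) \<le> card (T - T')"
    using base_diff_card_le[OF T T'] fin'' by blast
  moreover have "I - T = (T' - T) \<union> R" "I - T' = (T - T') \<union> R"
    using sub unfolding R_def by blast+
  moreover have "(T' - T) \<inter> R = {}" "(T - T') \<inter> R = {}"
    unfolding R_def by blast+
  ultimately show ?thesis
    using fin' fin'' le card_Un_disjoint by (metis finite_UnI le_antisym)
qed

lemma card_diff_max_indep_in_less:
  assumes B: "max_indep_in L X B" and B': "max_indep_in L X B'" and fin: "finite S'"
    and sub: "S \<union> B \<subseteq> S' \<union> B'" and x: "x \<in> (S' \<union> B') - (S \<union> B)"
  shows "card (S - B) < card (S' - B')"
proof -
  define R where "R = S' - B' - B"
  have "B - B' \<subseteq> S' - B'"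
    using sub by blast
  then have finBB': "finite (B - B')"
    using fin by (meson finite_Diff finite_subset)
  then have B'B: "finite (B' - B)" "card (B' - B) \<le> card (B - B')"
    using max_indep_in_diff_card_le[OF B B'] by blast+
  have finR: "finite R"
    using fin unfolding R_def by simp
  have ins: "insert x (S - B) \<subseteq> R \<union> (B' - B)" "x \<notin> S - B"
    using sub x unfolding R_def by blast+
  have finRB: "finite (R \<union> (B' - B))"
    using finR B'B(1) by simp
  have "finite (S - B)"
    by (rule finite_subset[OF _ finRB]) (use ins(1) in blast)
  then have "Suc (card (S - B)) = card (insert x (S - B))"
    using ins(2) by simp
  also have "\<dots> \<le> card (R \<union> (B' - B))"
    using card_mono[OF finRB ins(1)] .
  also have "\<dots> \<le> card R + card (B' - B)"
    by (rule card_Un_le)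
  also have "\<dots> \<le> card R + card (B - B')"
    using B'B(2) by simp
  also have "\<dots> = card (R \<union> (B - B'))"
    by (rule card_Un_disjoint[OF finR finBB', symmetric]) (auto simp: R_def)
  also have "\<dots> \<le> card (S' - B')"
    using card_mono[of "S' - B'" "R \<union> (B - B')"] fin sub unfolding R_def by blast
  finally show ?thesis
    by simp
qed

end

lemma union_indepI: "S \<in> L1 \<Longrightarrow> T \<in> L2 \<Longrightarrow> S \<union> T \<in> union_indep L1 L2"
  unfolding union_indep_def by blast

lemma union_indepE:
  assumes "I \<in> union_indep L1 L2"
  obtains S T where "S \<in> L1" "T \<in> L2" "I = S \<union> T"
  using assms unfolding union_indep_def by blast

lemma card_Int_shift_less:
  assumes "finite (A \<inter> C)" "t \<in> A \<inter> C" "t \<notin> D"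
  shows "card ((A - {t}) \<inter> C) + card (insert t B \<inter> D) < card (A \<inter> C) + card (B \<inter> D)"
proof -
  have "(A - {t}) \<inter> C = (A \<inter> C) - {t}" "insert t B \<inter> D = B \<inter> D"
    using assms(3) by auto
  moreover have "card ((A \<inter> C) - {t}) < card (A \<inter> C)"
    using assms(1,2) by (rule card_Diff1_less)
  ultimately show ?thesis
    by simp
qed

locale matroid_pair = F: indep_matroid EF LF + N: indep_matroid EN LN
  for EF :: "'a set" and LF :: "'a set set" and EN :: "'a set" and LN :: "'a set set"
begin

abbreviation LU :: "'a set set" where
  "LU \<equiv> union_indep LF LN"

lemma union_indep_ground: "I \<in> LU \<Longrightarrow> I \<subseteq> EF \<union> EN"
  by (elim union_indepE) (use F.indep_subset_ground N.indep_subset_ground in blast)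

lemma union_indep_subset:
  assumes "I \<in> LU" "J \<subseteq> I"
  shows "J \<in> LU"
proof -
  obtain S T where ST: "S \<in> LF" "T \<in> LN" "I = S \<union> T"
    using assms(1) by (rule union_indepE)
  have "J = (J \<inter> S) \<union> (J \<inter> T)"
    using assms(2) ST(3) by blast
  then show ?thesis
    using union_indepI[OF F.indep_subset[OF ST(1)] N.indep_subset[OF ST(2)]] by (metis Int_lower2)
qed

lemma union_indep_disjointE:
  assumes "I \<in> LU"
  obtains S T where "S \<in> LF" "T \<in> LN" "S \<inter> T = {}" "I = S \<union> T"
proof -
  obtain S T where "S \<in> LF" "T \<in> LN" "I = S \<union> T"
    using assms by (rule union_indepE)
  then show thesis
    using that[of "S - T" T] F.indep_subset[of S "S - T"] by blast
qed

definition base_split :: "'a set \<Rightarrow> 'a set \<Rightarrow> bool" where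
  "base_split I T \<longleftrightarrow> is_base LN T \<and> T \<subseteq> I \<and> I - T \<in> LF"

lemma base_split_union_indep:
  assumes "base_split I T"
  shows "I \<in> LU"
proof -
  have "I - T \<in> LF" "T \<in> LN" "I = (I - T) \<union> T"
    using assms is_base_indep[of LN T] unfolding base_split_def by auto
  then show ?thesis
    using union_indepI by metis
qed

lemma union_indep_subset_base_split:
  assumes "I \<in> LU"
  obtains J T where "I \<subseteq> J" "base_split J T"
proof -
  obtain S T where ST: "S \<in> LF" "T \<in> LN" "I = S \<union> T"
    using assms by (rule union_indepE)
  obtain B0 where "is_base LN B0"
    by (rule N.ex_base)
  then obtain T' where T': "is_base LN T'" "T \<subseteq> T'"
    using N.indep_extend_to_base[OF ST(2)] by blast
  have "base_split (S \<union> T') T'"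
    unfolding base_split_def using T'(1) F.indep_subset[OF ST(1), of "S \<union> T' - T'"] by blast
  then show thesis
    using that[of "S \<union> T'" T'] ST(3) T'(2) by blast
qed

lemma union_indep_min_overlapE:
  assumes "I \<in> LU"
  obtains S T where "S \<in> LF" "T \<in> LN" "S \<inter> T = {}" "I = S \<union> T"
    "\<And>S' T'. S' \<in> LF \<Longrightarrow> T' \<in> LN \<Longrightarrow> S' \<inter> T' = {} \<Longrightarrow> I = S' \<union> T' \<Longrightarrow>
      card (S \<inter> C) + card (T \<inter> D) \<le> card (S' \<inter> C) + card (T' \<inter> D)"
proof -
  define rep where "rep = (\<lambda>(S, T). S \<in> LF \<and> T \<in> LN \<and> S \<inter> T = {} \<and> I = S \<union> T)"
  define overlap :: "'a set \<times> 'a set \<Rightarrow> nat"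
    where "overlap = (\<lambda>(S, T). card (S \<inter> C) + card (T \<inter> D))"
  obtain S0 T0 where "S0 \<in> LF" "T0 \<in> LN" "S0 \<inter> T0 = {}" "I = S0 \<union> T0"
    by (rule union_indep_disjointE[OF assms])
  then have "rep (S0, T0)"
    unfolding rep_def by simp
  then obtain p where "rep p" "\<And>q. rep q \<Longrightarrow> overlap p \<le> overlap q"
    using ex_has_least_nat[of rep _ overlap] by blast
  moreover obtain S T where "p = (S, T)"
    by (cases p)
  ultimately show thesis
    using that[of S T] unfolding rep_def overlap_def by fastforce
qed

lemma non_augmentable_N_augment:
  assumes S: "S \<in> LF" and T: "T \<in> LN" and I: "I = S \<union> T"
    and TJ: "is_base LN TJ" "TJ \<subseteq> J" and nonaug: "\<forall>x\<in>J - I. insert x I \<notin> LU"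
    and not_base: "\<not> is_base LN T"
  shows "\<exists>t\<in>S \<inter> TJ. insert t T \<in> LN"
proof -
  obtain t where t: "t \<in> TJ - T" "insert t T \<in> LN"
    using N.base_augment[OF TJ(1) T not_base] by blast
  have "insert t I \<in> LU"
    using union_indepI[OF S t(2)] I by simp
  then have "t \<in> S"
    using nonaug t(1) TJ(2) I by blast
  then show ?thesis
    using t by blast
qed

lemma non_augmentable_F_augment:
  assumes S: "S \<in> LF" and T: "T \<in> LN" and I: "I = S \<union> T"
    and SJ: "SJ \<in> LF" "SJ \<subseteq> J" and nonaug: "\<forall>x\<in>J - I. insert x I \<notin> LU"
    and fin: "finite S" "finite SJ" and less: "card S < card SJ"
  shows "\<exists>s\<in>T \<inter> SJ. insert s S \<in> LF"
proof -
  obtain s where s: "s \<in> SJ - S" "insert s S \<in> LF"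
    using F.indep_augment[OF S SJ(1) fin less] by blast
  have "insert s I \<in> LU"
    using union_indepI[OF s(2) T] I by simp
  then have "s \<in> T"
    using nonaug s(1) SJ(2) I by blast
  then show ?thesis
    using s by blast
qed

end

locale finite_rank_union = matroid_pair +
  assumes finite_rank: "finite_rank LF"
begin

lemma F_indep_card_bounded:
  obtains r where "\<And>S. S \<in> LF \<Longrightarrow> finite S \<and> card S \<le> r"
  using finite_rank F.indep_card_le_finite_base unfolding finite_rank_def by blast

lemma finite_F_indep: "S \<in> LF \<Longrightarrow> finite S"
  using F_indep_card_bounded by blast

lemma base_split_card_eq:
  assumes "base_split I T" "base_split I T'"
  shows "card (I - T') = card (I - T)"
  using assms N.card_diff_base_eq finite_F_indep unfolding base_split_def by blast

lemma non_augmentable_card_le: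
  assumes J: "base_split J TJ" and I: "I \<in> LU" and nonaug: "\<forall>x\<in>J - I. insert x I \<notin> LU"
  shows "\<exists>T. base_split I T \<and> card (J - TJ) \<le> card (I - T)"
proof -
  define SJ where "SJ = J - TJ"
  have TJ: "is_base LN TJ" "TJ \<subseteq> J" and SJ: "SJ \<in> LF" "SJ \<subseteq> J" "finite SJ" "SJ \<inter> TJ = {}"
    using J finite_F_indep unfolding base_split_def SJ_def by auto
  obtain S T where S: "S \<in> LF" and T: "T \<in> LN" and disj: "S \<inter> T = {}" and IST: "I = S \<union> T"
    and min: "\<And>S' T'. S' \<in> LF \<Longrightarrow> T' \<in> LN \<Longrightarrow> S' \<inter> T' = {} \<Longrightarrow> I = S' \<union> T' \<Longrightarrow>
      card (S \<inter> TJ) + card (T \<inter> SJ) \<le> card (S' \<inter> TJ) + card (T' \<inter> SJ)"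
    using union_indep_min_overlapE[OF I, where C = TJ and D = SJ] by blast
  have finS: "finite S"
    using finite_F_indep[OF S] .
  have "is_base LN T"
  proof (rule ccontr)
    assume "\<not> is_base LN T"
    then obtain t where t: "t \<in> S \<inter> TJ" "insert t T \<in> LN"
      using non_augmentable_N_augment[OF S T IST TJ nonaug] by blast
    have "card (S \<inter> TJ) + card (T \<inter> SJ) \<le> card ((S - {t}) \<inter> TJ) + card (insert t T \<inter> SJ)"
      by (rule min) (use t disj IST F.indep_subset[OF S, of "S - {t}"] in auto)
    moreover have "card ((S - {t}) \<inter> TJ) + card (insert t T \<inter> SJ) < card (S \<inter> TJ) + card (T \<inter> SJ)"
      by (rule card_Int_shift_less) (use t SJ(4) finS in auto)
    ultimately show False
      by simp
  qed
  moreover have "card SJ \<le> card S"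
  proof (rule ccontr)
    assume "\<not> card SJ \<le> card S"
    then obtain s where s: "s \<in> T \<inter> SJ" "insert s S \<in> LF"
      using non_augmentable_F_augment[OF S T IST SJ(1,2) nonaug finS SJ(3)] by auto
    have "card (S \<inter> TJ) + card (T \<inter> SJ) \<le> card (insert s S \<inter> TJ) + card ((T - {s}) \<inter> SJ)"
      by (rule min) (use s disj IST N.indep_subset[OF T, of "T - {s}"] in auto)
    moreover have "card ((T - {s}) \<inter> SJ) + card (insert s S \<inter> TJ) < card (T \<inter> SJ) + card (S \<inter> TJ)"
      by (rule card_Int_shift_less) (use s SJ(3,4) in auto)
    ultimately show False
      by simp
  qed
  moreover have "I - T = S"
    using IST disj by blast
  ultimately show ?thesis
    using S IST unfolding base_split_def SJ_def by auto
qed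

lemma union_base_augment:
  assumes BU: "is_base LU BU" and A: "A \<in> LU" and not_base: "\<not> is_base LU A"
  shows "\<exists>b\<in>BU - A. insert b A \<in> LU"
proof (rule ccontr)
  assume "\<not> ?thesis"
  then have nonaug_A: "\<forall>x\<in>BU - A. insert x A \<notin> LU"
    by blast
  have nonaug_BU: "\<forall>x\<in>J - BU. insert x BU \<notin> LU" for J
    using is_base_maximal[OF BU] by blast
  obtain J2 T2 where "BU \<subseteq> J2" "base_split J2 T2"
    using union_indep_subset_base_split[OF is_base_indep[OF BU]] .
  then have split_BU: "base_split BU T2"
    using is_base_maximal[OF BU base_split_union_indep] by metis
  obtain Z where Z: "Z \<in> LU" "A \<subseteq> Z" "Z \<noteq> A"
    using not_base A unfolding is_base_def by blast
  then obtain z where "z \<in> Z" "z \<notin> A"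
    by blast
  then have z: "z \<notin> A" "insert z A \<in> LU"
    using union_indep_subset[OF Z(1)] Z(2) by auto
  obtain J T3 where J: "insert z A \<subseteq> J" "base_split J T3"
    using union_indep_subset_base_split[OF z(2)] .
  obtain T1 where T1: "base_split A T1" "card (BU - T2) \<le> card (A - T1)"
    using non_augmentable_card_le[OF split_BU A nonaug_A] by blast
  obtain T4 where T4: "base_split BU T4" "card (J - T3) \<le> card (BU - T4)"
    using non_augmentable_card_le[OF J(2) is_base_indep[OF BU] nonaug_BU] by blast
  have J_T1: "finite (J - T1)" "card (J - T1) = card (J - T3)"
    using N.card_diff_base_eq[of T3 T1 J] J T1(1) finite_F_indep unfolding base_split_def by auto
  have "A - T1 \<subset> J - T1"
    using J(1) z(1) T1(1) unfolding base_split_def by blast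
  then have "card (A - T1) < card (J - T1)"
    by (rule psubset_card_mono[OF J_T1(1)])
  also have "\<dots> \<le> card (BU - T4)"
    using J_T1(2) T4(2) by simp
  also have "\<dots> = card (BU - T2)"
    using base_split_card_eq[OF split_BU T4(1)] .
  finally show False
    using T1(2) by simp
qed

lemma union_max_indep_in_of_maximal_pair:
  assumes S: "S \<in> LF" "S \<subseteq> X" and B: "max_indep_in LN X B"
    and maximal: "\<And>S' B'. S' \<in> LF \<Longrightarrow> S' \<subseteq> X \<Longrightarrow> max_indep_in LN X B' \<Longrightarrow>
      S \<union> B \<subseteq> S' \<union> B' \<Longrightarrow> card (S' - B') \<le> card (S - B)"
  shows "max_indep_in LU X (S \<union> B)"
proof -
  have "I = S \<union> B" if I: "I \<in> LU" "S \<union> B \<subseteq> I" "I \<subseteq> X" for I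
  proof (rule ccontr)
    assume "I \<noteq> S \<union> B"
    then obtain x where x: "x \<in> I - (S \<union> B)"
      using I(2) by blast
    obtain S1 T1 where ST1: "S1 \<in> LF" "T1 \<in> LN" "I = S1 \<union> T1"
      using I(1) by (rule union_indepE)
    obtain B1 where B1: "max_indep_in LN X B1" "T1 \<subseteq> B1"
      using N.ex_max_indep_in[OF ST1(2)] ST1(3) I(3) by blast
    have sub: "S \<union> B \<subseteq> S1 \<union> B1" "x \<in> (S1 \<union> B1) - (S \<union> B)"
      using I(2) ST1(3) B1(2) x by blast+
    then have "card (S - B) < card (S1 - B1)"
      using N.card_diff_max_indep_in_less[OF B B1(1) finite_F_indep[OF ST1(1)]] by blast
    moreover have "card (S1 - B1) \<le> card (S - B)"
      using maximal[OF ST1(1) _ B1(1) sub(1)] ST1(3) I(3) by blast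
    ultimately show False
      by simp
  qed
  moreover have "S \<union> B \<in> LU" "S \<union> B \<subseteq> X"
    using union_indepI[OF S(1) max_indep_inD(1)[OF B]] S(2) max_indep_inD(2)[OF B] by auto
  ultimately show ?thesis
    unfolding max_indep_in_def by blast
qed

lemma union_ex_max_indep_in:
  assumes A: "A \<in> LU" "A \<subseteq> X"
  obtains M where "max_indep_in LU X M" "A \<subseteq> M"
proof -
  define P where "P = (\<lambda>(S, B). S \<in> LF \<and> S \<subseteq> X \<and> max_indep_in LN X B \<and> A \<subseteq> S \<union> B)"
  define excess :: "'a set \<times> 'a set \<Rightarrow> nat" where "excess = (\<lambda>(S, B). card (S - B))"
  obtain S0 T0 where ST0: "S0 \<in> LF" "T0 \<in> LN" "A = S0 \<union> T0"
    using A(1) by (rule union_indepE)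
  obtain B0 where B0: "max_indep_in LN X B0" "T0 \<subseteq> B0"
    using N.ex_max_indep_in[OF ST0(2)] ST0(3) A(2) by blast
  obtain r where r: "\<And>S. S \<in> LF \<Longrightarrow> finite S \<and> card S \<le> r"
    using F_indep_card_bounded by blast
  have "P (S0, B0)"
    unfolding P_def using ST0 B0 A(2) by auto
  moreover have "\<forall>p. P p \<longrightarrow> excess p < Suc r"
  proof (clarsimp simp: P_def excess_def)
    fix S B assume "S \<in> LF"
    then show "card (S - B) < Suc r"
      using card_mono[OF _ Diff_subset, of S B] r by (meson le_imp_less_Suc le_trans)
  qed
  ultimately obtain p where "P p" "\<And>q. P q \<Longrightarrow> excess q \<le> excess p"
    using Lattices_Big.ex_has_greatest_nat[of P _ excess] by blast
  then obtain S B where SB: "P (S, B)" and max: "\<And>S' B'. P (S', B') \<Longrightarrow> card (S' - B') \<le> card (S - B)"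
    unfolding excess_def by (metis case_prod_conv surj_pair)
  have "max_indep_in LU X (S \<union> B)"
  proof (rule union_max_indep_in_of_maximal_pair)
    show "card (S' - B') \<le> card (S - B)"
      if "S' \<in> LF" "S' \<subseteq> X" "max_indep_in LN X B'" "S \<union> B \<subseteq> S' \<union> B'" for S' B'
      using max[of S' B'] SB that unfolding P_def by blast
  qed (use SB in \<open>auto simp: P_def\<close>)
  then show thesis
    using that SB unfolding P_def by auto
qed

lemma union_matroid: "matroid (EF \<union> EN) LU"
  unfolding matroid_def
proof (intro conjI allI impI ballI)
  show "S \<subseteq> EF \<union> EN" if "S \<in> LU" for S
    using that by (rule union_indep_ground)
  show "{} \<in> LU"
    using union_indepI[OF F.empty_indep N.empty_indep] by simp
  show "A \<in> LU" if "B \<in> LU" "A \<subseteq> B" for A B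
    using that by (rule union_indep_subset)
  show "\<exists>b\<in>B - A. insert b A \<in> LU" if "is_base LU B" "A \<in> LU" "\<not> is_base LU A" for A B
    using that by (rule union_base_augment)
  show "\<exists>M. M \<in> LU \<and> A \<subseteq> M \<and> M \<subseteq> X \<and> (\<forall>S\<in>LU. M \<subseteq> S \<longrightarrow> S \<subseteq> X \<longrightarrow> S = M)"
    if A: "A \<in> LU" "A \<subseteq> X" for A X
  proof -
    obtain M where "max_indep_in LU X M" "A \<subseteq> M"
      using union_ex_max_indep_in[OF A] by blast
    then show ?thesis
      unfolding max_indep_in_def by (intro exI[of _ M]) simp
  qed
qed

end

theorem theorem3p5p1:
  fixes EF EN :: "'a set" and LF LN :: "'a set set"
  assumes "matroid EF LF" and "finite_rank LF" and "matroid EN LN"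
  shows "matroid (EF \<union> EN) (union_indep LF LN)"
proof -
  interpret finite_rank_union EF LF EN LN
    by unfold_locales (fact assms)+
  show ?thesis
    by (rule union_matroid)
qed

end
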